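(* Let $f_1,f_2$ be strongly hyperbolic functions, $p=(x_p,y_p)\in\mathbb{R}^2$, $s<0$, and let $q\in\mathcal{P}$ be a point not parallel to $p$. Then exactly one of the following holds: (1) there exists $t\in\mathbb{R}$ such that $\overline{l_{s,t}}$ contains $p$ and $q$; (2) there exist $a_1>0$, $b_1,c_1\in\mathbb{R}$ such that $\overline{f_{a_1,b_1,c_1}}$ contains $p$ and $q$ and $f'_{a_1,b_1,c_1}(x_p)=s$.
   Context: Identify $\mathbb{S}^1$ with $\mathbb{R}\cup\{\infty\}$, $\mathcal{P}=\mathbb{S}^1\times\mathbb{S}^1$, $\mathbb{R}^+=(0,\infty)$. Two points of $\mathcal{P}$ are parallel if they have the same first coordinate or the same second coordinate. A function $f:\mathbb{R}^+\to\mathbb{R}^+$ is strongly hyperbolic if: (1) $\lim_{x\to0+}f(x)=+\infty$, $\lim_{x\to+\infty}f(x)=0$; (2) $f$ strictly convex; (3) $\lim_{x\to+\infty}f(x+b)/f(x)=1$ for each $b\in\mathbb{R}$; (4) $f$ differentiable; (5) $\ln|f'|$ strictly convex. For $a>0$, $b,c\in\mathbb{R}$: $f_{a,b,c}:\mathbb{R}\setminus\{-b\}\to\mathbb{R}$, $f_{a,b,c}(x)=af_1(x+b)+c$ for $x>-b$, $f_{a,b,c}(x)=-af_2(-x-b)+c$ for $x<-b$; $\overline{f_{a,b,c}}=\{(x,f_{a,b,c}(x)):x\ne-b\}\cup\{(-b,\infty),(\infty,c)\}$; for $s,t\in\mathbb{R}$, $\overline{l_{s,t}}=\{(x,sx+t):x\in\mathbb{R}\}\cup\{(\infty,\infty)\}$.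 *)

theory Defs
  imports "HOL-Analysis.Analysis"
begin

text \<open>The circle S^1 = R \<union> {\<infinity>}: Fin r for r real, and Infty.\<close>
datatype ext = Fin real | Infty

type_synonym point = "ext \<times> ext"

definition parallel :: "point \<Rightarrow> point \<Rightarrow> bool" where
  "parallel p q \<longleftrightarrow> fst p = fst q \<or> snd p = snd q"

definition strictly_convex_on :: "real set \<Rightarrow> (real \<Rightarrow> real) \<Rightarrow> bool" where
  "strictly_convex_on S f \<longleftrightarrow> convex S \<and>
     (\<forall>x\<in>S. \<forall>y\<in>S. x \<noteq> y \<longrightarrow> (\<forall>u::real. 0 < u \<and> u < 1 \<longrightarrow>
        f (u * x + (1 - u) * y) < u * f x + (1 - u) * f y))"

text \<open>Strongly hyperbolic functions R^+ \<rightarrow> R^+ (only values on (0,\<infinity>) matter).\<close>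
definition strongly_hyperbolic :: "(real \<Rightarrow> real) \<Rightarrow> bool" where
  "strongly_hyperbolic f \<longleftrightarrow>
     (\<forall>x>0. f x > 0) \<and>
     filterlim f at_top (at_right 0) \<and>
     (f \<longlongrightarrow> 0) at_top \<and>
     strictly_convex_on {0<..} f \<and>
     (\<forall>b::real. ((\<lambda>x. f (x + b) / f x) \<longlongrightarrow> 1) at_top) \<and>
     (\<forall>x>0. f differentiable (at x)) \<and>
     strictly_convex_on {0<..} (\<lambda>x. ln \<bar>deriv f x\<bar>)"

text \<open>f_{a,b,c}; the value at x = -b is irrelevant (set to 0).\<close>
definition fabc :: "(real \<Rightarrow> real) \<Rightarrow> (real \<Rightarrow> real) \<Rightarrow> real \<Rightarrow> real \<Rightarrow> real \<Rightarrow> real \<Rightarrow> real" where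
  "fabc f1 f2 a b c x =
     (if x > -b then a * f1 (x + b) + c
      else if x < -b then - a * f2 (- x - b) + c
      else 0)"

definition fabc_bar :: "(real \<Rightarrow> real) \<Rightarrow> (real \<Rightarrow> real) \<Rightarrow> real \<Rightarrow> real \<Rightarrow> real \<Rightarrow> point set" where
  "fabc_bar f1 f2 a b c =
     {(Fin x, Fin (fabc f1 f2 a b c x)) | x. x \<noteq> -b} \<union> {(Fin (-b), Infty), (Infty, Fin c)}"

definition line_bar :: "real \<Rightarrow> real \<Rightarrow> point set" where
  "line_bar s t = {(Fin x, Fin (s * x + t)) | x. True} \<union> {(Infty, Infty)}"

end

theory Submission
  imports Defs
begin

text \<open>A curve f_{a,b,c} with slope s at p is determined by the branch containing p and by the
  distance u > 0 from xp to the pole -b. Strict convexity of f1 and f2 makes such a curve meet the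
  tangent line y = yp + s (x - xp) only at p, and (\<infinity>, \<infinity>) lies on every line but on no curve,
  so the two alternatives exclude each other. Conversely, for q off that line, q lying on the curve
  becomes an equation in u, for instance (f1 u - f1 (u + d)) / (- f1' u) = e / s when q = p + (d, e)
  lies on the branch of p, and it is solved by the intermediate value theorem: the relevant quotients
  are small or large near u = 0 because f \<rightarrow> \<infinity>, - f' \<rightarrow> \<infinity> and f / (- f') \<rightarrow> 0 there, and
  they are large or small elsewhere because f' (u + d) / f' u comes arbitrarily close to 1, a
  consequence of f (u + d) / f u \<rightarrow> 1.\<close>

lemma IVT_is_interval:
  fixes g :: "real \<Rightarrow> real"
  assumes "continuous_on I g" "is_interval I" "a \<in> I" "b \<in> I" "g a < t" "t < g b"
  shows "\<exists>x\<in>I. g x = t"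
proof -
  have "connected (g ` I)"
    using assms(1,2) by (simp add: connected_continuous_image is_interval_connected)
  then have "{g a..g b} \<subseteq> g ` I"
    using assms(3,4) by (intro connected_contains_Icc) auto
  then have "t \<in> g ` I"
    using assms(5,6) by (meson atLeastAtMost_iff less_imp_le subsetD)
  then show ?thesis
    by auto
qed

lemma at_right_0_obtain:
  assumes "eventually P (at_right (0::real))" "0 < b"
  obtains v where "0 < v" "v < b" "P v"
proof -
  obtain c where "0 < c" "\<And>v. 0 < v \<Longrightarrow> v < c \<Longrightarrow> P v"
    using assms(1) unfolding eventually_at_right_field by auto
  then show ?thesis
    using assms(2) that[of "min b c / 2"] by auto
qed

lemma strictly_convex_onD:
  assumes "strictly_convex_on S g" "x \<in> S" "y \<in> S" "x \<noteq> y" "0 < u" "u < 1"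
  shows "g (u * x + (1 - u) * y) < u * g x + (1 - u) * g y"
  using assms unfolding strictly_convex_on_def by blast

lemma tendsto_shifted_difference_quotient:
  assumes "(f has_real_derivative L) (at x)"
  shows "((\<lambda>h. (f (x + 2 * h) - f (x + h)) / h) \<longlongrightarrow> L) (at 0)"
proof -
  define Q where "Q h = (f (x + h) - f x) / h" for h
  have Q: "(Q \<longlongrightarrow> L) (at 0)"
    using assms unfolding DERIV_def Q_def .
  have "filterlim (\<lambda>h::real. 2 * h) (at 0) (at 0)"
    by (auto simp: filterlim_at eventually_at intro!: tendsto_eq_intros exI[of _ 1])
  then have "((\<lambda>h. 2 * Q (2 * h) - Q h) \<longlongrightarrow> 2 * L - L) (at 0)"
    by (intro tendsto_intros Q filterlim_compose[OF Q])
  moreover have "\<forall>\<^sub>F h in at 0. 2 * Q (2 * h) - Q h = (f (x + 2 * h) - f (x + h)) / h"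
    by (auto simp: eventually_at Q_def field_simps intro!: exI[of _ 1])
  ultimately show ?thesis
    by (simp add: tendsto_cong)
qed

section \<open>Strongly hyperbolic functions\<close>

locale strongly_hyperbolic_function =
  fixes f :: "real \<Rightarrow> real"
  assumes strongly_hyperbolic: "strongly_hyperbolic f"
begin

lemma pos: "0 < x \<Longrightarrow> 0 < f x"
  using strongly_hyperbolic unfolding strongly_hyperbolic_def by auto

lemma filterlim_at_right_0: "filterlim f at_top (at_right 0)"
  using strongly_hyperbolic unfolding strongly_hyperbolic_def by auto

lemma tendsto_at_top: "(f \<longlongrightarrow> 0) at_top"
  using strongly_hyperbolic unfolding strongly_hyperbolic_def by auto

lemma shift_ratio_tendsto: "((\<lambda>x. f (x + b) / f x) \<longlongrightarrow> 1) at_top"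
  using strongly_hyperbolic unfolding strongly_hyperbolic_def by auto

lemma strictly_convex:
  "0 < x \<Longrightarrow> 0 < y \<Longrightarrow> x \<noteq> y \<Longrightarrow> 0 < u \<Longrightarrow> u < 1 \<Longrightarrow>
    f (u * x + (1 - u) * y) < u * f x + (1 - u) * f y"
  using strongly_hyperbolic strictly_convex_onD unfolding strongly_hyperbolic_def by auto

lemma has_real_derivative_deriv: "0 < x \<Longrightarrow> (f has_real_derivative deriv f x) (at x)"
  using strongly_hyperbolic unfolding strongly_hyperbolic_def
  by (simp add: DERIV_deriv_iff_real_differentiable)

lemma isCont_fun: "0 < x \<Longrightarrow> isCont f x"
  using has_real_derivative_deriv DERIV_isCont by blast

lemma isCont_comp_pos [continuous_intros]:
  "isCont g x \<Longrightarrow> 0 < g x \<Longrightarrow> isCont (\<lambda>u. f (g u)) x"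
  using isCont_o2 isCont_fun by blast

lemma convex_on_pos: "convex_on {0<..} f"
proof (rule convex_onI)
  fix t x y :: real
  assume "0 < t" "t < 1" "x \<in> {0<..}" "y \<in> {0<..}"
  then show "f ((1 - t) *\<^sub>R x + t *\<^sub>R y) \<le> (1 - t) * f x + t * f y"
    using strictly_convex[of x y "1 - t"] by (cases "x = y") (auto simp: algebra_simps)
qed simp

lemma above_tangent: "0 < x \<Longrightarrow> 0 < y \<Longrightarrow> deriv f x * (y - x) \<le> f y - f x"
  using convex_on_imp_above_tangent[OF convex_on_pos] has_real_derivative_deriv
  by (auto simp: has_field_derivative_at_within interior_open)

lemma strictly_above_tangent:
  assumes "0 < x" "0 < y" "x \<noteq> y"
  shows "deriv f x * (y - x) < f y - f x"
proof -
  define z where "z = (x + y) / 2"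
  have "f z < (f x + f y) / 2"
    using strictly_convex[of x y "1/2"] assms by (simp add: z_def field_simps)
  moreover have "deriv f x * (z - x) \<le> f z - f x"
    using assms by (intro above_tangent) (auto simp: z_def)
  ultimately show ?thesis
    by (simp add: z_def field_simps)
qed

lemma deriv_neg:
  assumes "0 < x"
  shows "deriv f x < 0"
proof (rule ccontr)
  assume "\<not> deriv f x < 0"
  then have above: "f x < f y" if "x < y" for y
  proof -
    have "0 \<le> deriv f x * (y - x)"
      using \<open>\<not> deriv f x < 0\<close> that by simp
    then show ?thesis
      using strictly_above_tangent[of x y] assms that by linarith
  qed
  have "\<forall>\<^sub>F y in at_top. f y < f x"
    using tendsto_at_top pos[OF assms] by (simp add: order_tendstoD(2))
  then obtain N where "\<And>y. N \<le> y \<Longrightarrow> f y < f x"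
    by (auto simp: eventually_at_top_linorder)
  then have "f (max N (x + 1)) < f x"
    by simp
  moreover have "f x < f (max N (x + 1))"
    by (rule above) simp
  ultimately show False
    by simp
qed

lemma deriv_mono:
  assumes "0 < x" "x \<le> y"
  shows "deriv f x \<le> deriv f y"
proof -
  have "deriv f x * (y - x) \<le> f y - f x" "deriv f y * (x - y) \<le> f x - f y"
    using above_tangent assms by auto
  then have "deriv f x * (y - x) \<le> deriv f y * (y - x)"
    by (simp add: algebra_simps)
  then show ?thesis
    using assms by (cases "x = y") auto
qed

lemma strict_decreasing:
  assumes "0 < x" "x < y"
  shows "f y < f x"
proof -
  have "0 < deriv f y * (x - y)"
    using deriv_neg[of y] assms by (simp add: mult_neg_neg)
  then show ?thesis
    using strictly_above_tangent[of y x] assms by simp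
qed

text \<open>Since f' is monotone, f' (x + h) lies between f' x and (f (x + 2 h) - f (x + h)) / h,
  which tends to f' x.\<close>
lemma isCont_deriv:
  assumes "0 < x"
  shows "isCont (deriv f) x"
proof -
  define R where "R h = (f (x + 2 * h) - f (x + h)) / h" for h
  have squeeze: "\<bar>deriv f (x + h) - deriv f x\<bar> \<le> \<bar>R h - deriv f x\<bar>"
    if "h \<noteq> 0" "\<bar>h\<bar> < x / 2" for h
  proof -
    have "deriv f (x + h) * h \<le> f (x + 2 * h) - f (x + h)"
      using above_tangent[of "x + h" "x + 2 * h"] that by simp
    then show ?thesis
      using deriv_mono[of x "x + h"] deriv_mono[of "x + h" x] assms that
      by (cases "0 < h") (auto simp: R_def field_simps)
  qed
  have "\<forall>\<^sub>F h in at 0. norm (deriv f (x + h) - deriv f x) \<le> \<bar>R h - deriv f x\<bar>"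
    unfolding eventually_at using assms squeeze by (intro exI[of _ "x / 2"]) auto
  moreover have "((\<lambda>h. \<bar>R h - deriv f x\<bar>) \<longlongrightarrow> 0) (at 0)"
    using tendsto_shifted_difference_quotient[OF has_real_derivative_deriv[OF assms]]
    by (simp add: R_def tendsto_rabs_zero_iff LIM_zero_iff)
  ultimately have "((\<lambda>h. deriv f (x + h) - deriv f x) \<longlongrightarrow> 0) (at 0)"
    by (rule Lim_null_comparison)
  then show ?thesis
    by (simp add: isCont_iff LIM_zero_iff)
qed

lemma continuous_on_div_neg_deriv:
  assumes "S \<subseteq> {0<..}" "\<And>u. u \<in> S \<Longrightarrow> isCont g u"
  shows "continuous_on S (\<lambda>u. g u / - deriv f u)"
proof (intro continuous_at_imp_continuous_on ballI)
  fix u assume "u \<in> S"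
  then show "isCont (\<lambda>u. g u / - deriv f u) u"
    using assms isCont_deriv[of u] deriv_neg[of u] by (intro continuous_intros) auto
qed

lemma filterlim_neg_deriv_at_right_0: "filterlim (\<lambda>u. - deriv f u) at_top (at_right 0)"
proof (rule filterlim_at_top_mono)
  show "filterlim (\<lambda>u. f u - f 1) at_top (at_right 0)"
    using filterlim_tendsto_add_at_top[OF tendsto_const filterlim_at_right_0, of "- f 1"] by simp
  have "f u - f 1 \<le> - deriv f u" if "0 < u" "u < 1" for u
  proof -
    have "- deriv f u * (1 - u) \<le> - deriv f u"
      using deriv_neg[of u] that by (simp add: mult_left_le)
    then show ?thesis
      using above_tangent[of u 1] that by simp
  qed
  then show "\<forall>\<^sub>F u in at_right 0. f u - f 1 \<le> - deriv f u"
    unfolding eventually_at_right_field by (intro exI[of _ 1]) auto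
qed

text \<open>For 0 < u < v the tangent at u gives f u \<le> f v + (- f' u) v, and - f' u \<rightarrow> \<infinity>.\<close>
lemma tendsto_div_neg_deriv_at_right_0: "((\<lambda>u. f u / - deriv f u) \<longlongrightarrow> 0) (at_right 0)"
proof (rule order_tendstoI)
  fix a :: real
  assume "a < 0"
  have "a < f u / - deriv f u" if "0 < u" for u
  proof -
    have "0 < f u / - deriv f u"
      using pos[OF that] deriv_neg[OF that] by (simp add: divide_pos_neg)
    then show ?thesis
      using \<open>a < 0\<close> by linarith
  qed
  then show "\<forall>\<^sub>F u in at_right 0. a < f u / - deriv f u"
    unfolding eventually_at_right_field by (intro exI[of _ 1]) auto
next
  fix e :: real
  assume "0 < e"
  define v where "v = e / 2"
  have "\<forall>\<^sub>F u in at_right 0. 2 * f v / e < - deriv f u"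
    using filterlim_neg_deriv_at_right_0 by (simp add: filterlim_at_top_dense)
  moreover have "\<forall>\<^sub>F u in at_right 0. 0 < u \<and> u < v"
    unfolding eventually_at_right_field using \<open>0 < e\<close> by (intro exI[of _ v]) (auto simp: v_def)
  ultimately show "\<forall>\<^sub>F u in at_right 0. f u / - deriv f u < e"
  proof eventually_elim
    case (elim u)
    then have "0 < - deriv f u" "0 < u" "u < v"
      using deriv_neg by auto
    then have "deriv f u * u < 0"
      by (simp add: mult_neg_pos)
    moreover have "deriv f u * (v - u) \<le> f v - f u"
      using above_tangent elim \<open>0 < e\<close> by (simp add: v_def)
    ultimately have "f u \<le> f v + (- deriv f u) * v"
      by (simp add: algebra_simps)
    then show ?case
      using elim \<open>0 < - deriv f u\<close> \<open>0 < e\<close> by (simp add: v_def field_simps)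
  qed
qed

text \<open>Otherwise u \<mapsto> f (u + D) - k f u would be nondecreasing with limit 0, so that
  f (u + D) / f u \<le> k for all u, contradicting f (u + D) / f u \<rightarrow> 1.\<close>
lemma ex_deriv_shift_ratio_gt:
  assumes "0 < D" "k < 1"
  shows "\<exists>u>0. k < deriv f (u + D) / deriv f u"
proof (rule ccontr)
  assume "\<not> ?thesis"
  then have ratio_le: "deriv f (u + D) / deriv f u \<le> k" if "0 < u" for u
    using that by auto
  define h where "h u = f (u + D) - k * f u" for u
  have h_mono: "h u \<le> h w" if "0 < u" "u \<le> w" for u w
  proof (rule DERIV_nonneg_imp_nondecreasing[OF that(2)])
    fix x
    assume "u \<le> x" "x \<le> w"
    with that have "0 < x"
      by simp
    have "((\<lambda>x. f (x + D)) has_real_derivative deriv f (x + D)) (at x)"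
      using has_real_derivative_deriv[of "x + D"] \<open>0 < x\<close> assms by (simp add: DERIV_shift)
    then have "(h has_real_derivative deriv f (x + D) - k * deriv f x) (at x)"
      unfolding h_def using has_real_derivative_deriv[OF \<open>0 < x\<close>]
      by (auto intro!: derivative_eq_intros)
    moreover have "0 \<le> deriv f (x + D) - k * deriv f x"
      using ratio_le[OF \<open>0 < x\<close>] deriv_neg[OF \<open>0 < x\<close>]
      by (simp add: divide_le_eq algebra_simps)
    ultimately show "\<exists>y. (h has_real_derivative y) (at x) \<and> 0 \<le> y"
      by blast
  qed
  have "filterlim (\<lambda>x. x + D) at_top at_top"
    by (subst add.commute) (rule filterlim_tendsto_add_at_top[OF tendsto_const filterlim_ident])
  then have "(h \<longlongrightarrow> 0 - k * 0) at_top"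
    unfolding h_def by (intro tendsto_intros filterlim_compose[OF tendsto_at_top] tendsto_at_top)
  then have h_nonpos: "h u \<le> 0" if "0 < u" for u
    using h_mono that
    by (intro tendsto_lowerbound) (auto simp: eventually_at_top_linorder intro!: exI[of _ u])
  have "\<forall>\<^sub>F u in at_top. 0 < u \<and> k < f (u + D) / f u"
    using eventually_gt_at_top order_tendstoD(1)[OF shift_ratio_tendsto assms(2)]
    by (rule eventually_conj)
  then obtain u where "0 < u" "k < f (u + D) / f u"
    by (auto simp: eventually_at_top_linorder)
  then show False
    using h_nonpos[of u] pos[of u] by (simp add: h_def pos_less_divide_eq)
qed

lemma ex_forward_difference_gt:
  assumes "0 < t" "t < D"
  shows "\<exists>u>0. t * - deriv f u < f u - f (u + D)"
proof -
  obtain u where "0 < u" and ratio: "t / D < deriv f (u + D) / deriv f u"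
    using ex_deriv_shift_ratio_gt[of D "t / D"] assms by auto
  have "t * - deriv f u < D * - deriv f (u + D)"
    using ratio deriv_neg[OF \<open>0 < u\<close>] assms by (simp add: field_simps)
  also have "\<dots> \<le> f u - f (u + D)"
    using above_tangent[of "u + D" u] \<open>0 < u\<close> assms by (simp add: algebra_simps)
  finally show ?thesis
    using \<open>0 < u\<close> by blast
qed

lemma ex_backward_difference_lt:
  assumes "0 < D" "D < t"
  shows "\<exists>u>0. f u - f (u + D) < t * - deriv f (u + D)"
proof -
  obtain u where "0 < u" and ratio: "D / t < deriv f (u + D) / deriv f u"
    using ex_deriv_shift_ratio_gt[of D "D / t"] assms by auto
  have "f u - f (u + D) \<le> D * - deriv f u"
    using above_tangent[of u "u + D"] \<open>0 < u\<close> assms by (simp add: algebra_simps)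
  also have "\<dots> < t * - deriv f (u + D)"
    using ratio deriv_neg[OF \<open>0 < u\<close>] assms by (simp add: field_simps)
  finally show ?thesis
    using \<open>0 < u\<close> by blast
qed

lemma eventually_lt_neg_deriv_at_right_0:
  assumes "0 < t"
  shows "\<forall>\<^sub>F u in at_right 0. f u < t * - deriv f u"
proof -
  have "\<forall>\<^sub>F u in at_right 0. 0 < u \<and> f u / - deriv f u < t"
    using eventually_at_right_less order_tendstoD(2)[OF tendsto_div_neg_deriv_at_right_0 assms]
    by (rule eventually_conj)
  then show ?thesis
  proof eventually_elim
    case (elim u)
    then have "0 < - deriv f u"
      using deriv_neg by simp
    with elim show ?case
      by (simp only: pos_divide_less_eq)
  qed
qed

lemma ex_div_neg_deriv_eq:
  assumes "is_interval S" "S \<subseteq> {0<..}" "\<And>u. u \<in> S \<Longrightarrow> isCont g u" "a \<in> S" "b \<in> S"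
    and "g a < t * - deriv f a" "t * - deriv f b < g b"
  shows "\<exists>u\<in>S. g u / - deriv f u = t"
proof (rule IVT_is_interval[OF continuous_on_div_neg_deriv assms(1) assms(4,5)])
  have "0 < - deriv f a" "0 < - deriv f b"
    using deriv_neg assms(2,4,5) by auto
  then show "g a / - deriv f a < t" "t < g b / - deriv f b"
    using assms(6,7) by (simp_all only: pos_divide_less_eq pos_less_divide_eq)
qed (use assms(2,3) in auto)

lemma ex_fun_div_neg_deriv_eq:
  assumes "0 < t"
  shows "\<exists>u>0. f u / - deriv f u = t"
proof -
  obtain a where "0 < a" "f a < t * - deriv f a"
    using at_right_0_obtain[OF eventually_lt_neg_deriv_at_right_0[OF assms], of 1] by auto
  moreover obtain b where "0 < b" "t * - deriv f b < f b - f (b + 2 * t)"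
    using ex_forward_difference_gt[of t "2 * t"] assms by auto
  moreover have "0 < f (b + 2 * t)"
    using pos \<open>0 < b\<close> assms by simp
  ultimately have "\<exists>u\<in>{0<..}. f u / - deriv f u = t"
    by (intro ex_div_neg_deriv_eq[where a = a and b = b]) (auto simp: is_interval_ci isCont_fun)
  then show ?thesis
    by auto
qed

lemma ex_forward_difference_div_neg_deriv_eq:
  assumes "0 < t" "t < D"
  shows "\<exists>u>0. (f u - f (u + D)) / - deriv f u = t"
proof -
  obtain a where "0 < a" "f a < t * - deriv f a"
    using at_right_0_obtain[OF eventually_lt_neg_deriv_at_right_0[OF assms(1)], of 1] by auto
  moreover have "0 < f (a + D)"
    using pos \<open>0 < a\<close> assms by simp
  moreover obtain b where "0 < b" "t * - deriv f b < f b - f (b + D)"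
    using ex_forward_difference_gt assms by blast
  ultimately have "\<exists>u\<in>{0<..}. (f u - f (u + D)) / - deriv f u = t"
    using assms
    by (intro ex_div_neg_deriv_eq[where a = a and b = b])
      (auto simp: is_interval_ci intro!: continuous_intros isCont_fun)
  then show ?thesis
    by auto
qed

lemma ex_backward_difference_div_neg_deriv_eq:
  assumes "0 < D" "D < t"
  shows "\<exists>u>D. (f (u - D) - f u) / - deriv f u = t"
proof -
  have "\<forall>\<^sub>F v in at_right 0. f D + t * - deriv f D < f v"
    using filterlim_at_right_0 by (simp add: filterlim_at_top_dense)
  then obtain v where v: "0 < v" "v < D" "f D + t * - deriv f D < f v"
    using at_right_0_obtain[OF _ assms(1)] by blast
  have "f (v + D) < f D"
    using strict_decreasing[of D "v + D"] v assms by simp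
  moreover have "t * - deriv f (v + D) \<le> t * - deriv f D"
    using deriv_mono[of D "v + D"] v assms by (simp add: mult_left_mono)
  ultimately have high: "t * - deriv f (v + D) < f v - f (v + D)"
    using v by simp
  obtain w where "0 < w" "f w - f (w + D) < t * - deriv f (w + D)"
    using ex_backward_difference_lt assms by blast
  then have "\<exists>u\<in>{D<..}. (f (u - D) - f u) / - deriv f u = t"
    using v high assms
    by (intro ex_div_neg_deriv_eq[where a = "w + D" and b = "v + D"])
      (auto simp: is_interval_ci intro!: continuous_intros isCont_fun)
  then show ?thesis
    by auto
qed

lemma ex_sum_div_neg_deriv_eq:
  assumes "strongly_hyperbolic_function g" "0 < D" "0 < t"
  shows "\<exists>w\<in>{0<..<D}. (g (D - w) + f w) / - deriv f w = t"
proof -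
  interpret g: strongly_hyperbolic_function g
    by fact
  have "0 < D / 2"
    using assms by simp
  have "\<forall>\<^sub>F w in at_right 0. 2 * g (D / 2) / t < - deriv f w \<and> f w < t / 2 * - deriv f w"
    using filterlim_neg_deriv_at_right_0 eventually_lt_neg_deriv_at_right_0[of "t / 2"] assms
    by (auto simp: filterlim_at_top_dense intro: eventually_conj)
  then obtain a where a: "0 < a" "a < D / 2" "2 * g (D / 2) / t < - deriv f a" "f a < t / 2 * - deriv f a"
    using at_right_0_obtain[OF _ \<open>0 < D / 2\<close>] by blast
  then have "g (D - a) < t / 2 * - deriv f a"
    using g.strict_decreasing[of "D / 2" "D - a"] assms by (simp add: field_simps)
  then have low: "g (D - a) + f a < t * - deriv f a"
    using a(4) by simp
  have "\<forall>\<^sub>F v in at_right 0. t * - deriv f (D / 2) < g v"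
    using g.filterlim_at_right_0 by (simp add: filterlim_at_top_dense)
  then obtain v where v: "0 < v" "v < D / 2" "t * - deriv f (D / 2) < g v"
    using at_right_0_obtain[OF _ \<open>0 < D / 2\<close>] by blast
  then have "t * - deriv f (D - v) \<le> t * - deriv f (D / 2)"
    using deriv_mono[of "D / 2" "D - v"] assms by (simp add: mult_left_mono)
  then have high: "t * - deriv f (D - v) < g (D - (D - v)) + f (D - v)"
    using v pos[of "D - v"] by simp
  show ?thesis
    using a v assms
    by (intro ex_div_neg_deriv_eq[OF _ _ _ _ _ low high])
      (auto simp: is_interval_1 intro!: continuous_intros isCont_fun g.isCont_comp_pos)
qed

end

section \<open>The curves through p with slope s\<close>

lemma fabc_right: "- b < x \<Longrightarrow> fabc f1 f2 a b c x = a * f1 (x + b) + c"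
  by (simp add: fabc_def)

lemma fabc_left: "x < - b \<Longrightarrow> fabc f1 f2 a b c x = - a * f2 (- x - b) + c"
  by (simp add: fabc_def)

lemma Fin_Fin_in_fabc_bar [simp]:
  "(Fin x, Fin y) \<in> fabc_bar f1 f2 a b c \<longleftrightarrow> x \<noteq> - b \<and> y = fabc f1 f2 a b c x"
  by (auto simp: fabc_bar_def)

lemma Infty_Fin_in_fabc_bar [simp]: "(Infty, Fin y) \<in> fabc_bar f1 f2 a b c \<longleftrightarrow> y = c"
  by (auto simp: fabc_bar_def)

lemma Fin_Infty_in_fabc_bar [simp]: "(Fin x, Infty) \<in> fabc_bar f1 f2 a b c \<longleftrightarrow> x = - b"
  by (auto simp: fabc_bar_def)

lemma Infty_Infty_notin_fabc_bar [simp]: "(Infty, Infty) \<notin> fabc_bar f1 f2 a b c"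
  by (auto simp: fabc_bar_def)

lemma Fin_Fin_in_line_bar [simp]: "(Fin x, Fin y) \<in> line_bar s t \<longleftrightarrow> y = s * x + t"
  by (auto simp: line_bar_def)

lemma Infty_Infty_in_line_bar [simp]: "(Infty, Infty) \<in> line_bar s t"
  by (auto simp: line_bar_def)

lemma fabc_has_real_derivative_right:
  assumes "strongly_hyperbolic_function f1" "- b < x"
  shows "(fabc f1 f2 a b c has_real_derivative a * deriv f1 (x + b)) (at x)"
proof -
  interpret f1: strongly_hyperbolic_function f1
    by fact
  have "((\<lambda>x. f1 (x + b)) has_real_derivative deriv f1 (x + b)) (at x)"
    using f1.has_real_derivative_deriv[of "x + b"] assms(2) by (simp add: DERIV_shift)
  then have "((\<lambda>x. a * f1 (x + b) + c) has_real_derivative a * deriv f1 (x + b)) (at x)"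
    by (auto intro!: derivative_eq_intros)
  then show ?thesis
    by (rule has_field_derivative_transform_within_open[where S = "{- b<..}"])
      (use assms(2) in \<open>auto simp: fabc_right\<close>)
qed

fun ext_neg :: "ext \<Rightarrow> ext" where
  "ext_neg (Fin x) = Fin (- x)"
| "ext_neg Infty = Infty"

definition point_reflect :: "point \<Rightarrow> point" where
  "point_reflect = map_prod ext_neg ext_neg"

lemma point_reflect_simps [simp]:
  "point_reflect (u, v) = (ext_neg u, ext_neg v)"
  by (simp add: point_reflect_def)

lemma point_reflect_point_reflect [simp]: "point_reflect (point_reflect q) = q"
proof -
  have "ext_neg (ext_neg z) = z" for z
    by (cases z) auto
  then show ?thesis
    by (cases q) simp
qed

lemma fabc_mirror: "fabc f2 f1 a b c x = - fabc f1 f2 a (- b) (- c) (- x)"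
  by (simp add: fabc_def)

lemma point_reflect_in_fabc_bar [simp]:
  "point_reflect q \<in> fabc_bar f2 f1 a b c \<longleftrightarrow> q \<in> fabc_bar f1 f2 a (- b) (- c)"
proof (cases q)
  case (Pair u v)
  then show ?thesis
    by (cases u; cases v) (auto simp: fabc_mirror[of f2 f1])
qed

lemma fabc_mirror_has_real_derivative:
  assumes "(fabc f1 f2 a b c has_real_derivative s) (at x)"
  shows "(fabc f2 f1 a (- b) (- c) has_real_derivative s) (at (- x))"
proof -
  have "((\<lambda>x. fabc f1 f2 a b c (- x)) has_real_derivative - s) (at (- x))"
    using assms DERIV_mirror[where f = "fabc f1 f2 a b c" and x = "- x" and y = s] by simp
  then have "((\<lambda>x. - fabc f1 f2 a b c (- x)) has_real_derivative s) (at (- x))"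
    using DERIV_minus by fastforce
  moreover have "fabc f2 f1 a (- b) (- c) = (\<lambda>x. - fabc f1 f2 a b c (- x))"
    by (rule ext) (simp add: fabc_mirror[of f2 f1])
  ultimately show ?thesis
    by simp
qed

definition fabc_joins ::
    "(real \<Rightarrow> real) \<Rightarrow> (real \<Rightarrow> real) \<Rightarrow> real \<Rightarrow> real \<Rightarrow> real \<Rightarrow> point \<Rightarrow> bool" where
  "fabc_joins f1 f2 s xp yp q \<longleftrightarrow>
    (\<exists>a b c. 0 < a \<and> (Fin xp, Fin yp) \<in> fabc_bar f1 f2 a b c \<and> q \<in> fabc_bar f1 f2 a b c \<and>
      (fabc f1 f2 a b c has_real_derivative s) (at xp))"

lemma fabc_joins_mirror:
  "fabc_joins f2 f1 s (- xp) (- yp) (point_reflect q) \<longleftrightarrow> fabc_joins f1 f2 s xp yp q"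
proof -
  have mirror: "fabc_joins f2 f1 s (- xp) (- yp) (point_reflect q)"
    if joins: "fabc_joins f1 f2 s xp yp q" for f1 f2 :: "real \<Rightarrow> real" and xp yp q
  proof -
    obtain a b c where "0 < a" "(Fin xp, Fin yp) \<in> fabc_bar f1 f2 a b c" "q \<in> fabc_bar f1 f2 a b c"
      and "(fabc f1 f2 a b c has_real_derivative s) (at xp)"
      using joins unfolding fabc_joins_def by blast
    moreover have "(Fin (- xp), Fin (- yp)) = point_reflect (Fin xp, Fin yp)"
      by simp
    ultimately show ?thesis
      unfolding fabc_joins_def
      by (intro exI[of _ a] exI[of _ "- b"] exI[of _ "- c"])
        (simp only: point_reflect_in_fabc_bar minus_minus fabc_mirror_has_real_derivative)
  qed
  show ?thesis
    using mirror[of f2 f1 "- xp" "- yp" "point_reflect q"] mirror[of f1 f2 xp yp q] by auto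
qed

text \<open>The curves having p on their right branch, with slope s there: the pole - b lies at distance u
  left of xp, a = s / f1' u gives the slope, and c puts p on the curve.\<close>
lemma fabc_joins_right_branch:
  assumes "strongly_hyperbolic_function f1" "s < 0" "0 < u"
    and "q \<in> fabc_bar f1 f2 (s / deriv f1 u) (u - xp) (yp - s / deriv f1 u * f1 u)"
  shows "fabc_joins f1 f2 s xp yp q"
  unfolding fabc_joins_def
proof (intro exI conjI)
  have "deriv f1 u < 0"
    using strongly_hyperbolic_function.deriv_neg[OF assms(1,3)] .
  then show "0 < s / deriv f1 u"
    using assms(2) by (simp add: divide_neg_neg)
  show "(Fin xp, Fin yp) \<in> fabc_bar f1 f2 (s / deriv f1 u) (u - xp) (yp - s / deriv f1 u * f1 u)"
    using assms(3) by (simp add: fabc_right)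
  show "(fabc f1 f2 (s / deriv f1 u) (u - xp) (yp - s / deriv f1 u * f1 u) has_real_derivative s) (at xp)"
    using fabc_has_real_derivative_right[OF assms(1), where a = "s / deriv f1 u" and b = "u - xp" and x = xp]
      assms(3) \<open>deriv f1 u < 0\<close>
    by simp
qed (fact assms(4))

lemma fabc_joins_left_branch:
  assumes "strongly_hyperbolic_function f2" "s < 0" "0 < u"
    and "q \<in> fabc_bar f1 f2 (s / deriv f2 u) (- xp - u) (yp + s / deriv f2 u * f2 u)"
  shows "fabc_joins f1 f2 s xp yp q"
proof -
  have "u - - xp = - (- xp - u)" "- yp - s / deriv f2 u * f2 u = - (yp + s / deriv f2 u * f2 u)"
    by simp_all
  then have "point_reflect q \<in> fabc_bar f2 f1 (s / deriv f2 u) (u - - xp) (- yp - s / deriv f2 u * f2 u)"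
    using assms(4) by (simp only: point_reflect_in_fabc_bar minus_minus)
  then show ?thesis
    using fabc_joins_right_branch[OF assms(1-3)] fabc_joins_mirror by blast
qed

lemma fabc_joins_Infty_Fin:
  assumes "strongly_hyperbolic_function f1" "s < 0" "y < yp"
  shows "fabc_joins f1 f2 s xp yp (Infty, Fin y)"
proof -
  interpret f1: strongly_hyperbolic_function f1
    by fact
  have "0 < (yp - y) / - s"
    using assms(2,3) by (simp add: divide_pos_neg)
  then obtain u where "0 < u" "f1 u / - deriv f1 u = (yp - y) / - s"
    using f1.ex_fun_div_neg_deriv_eq by blast
  moreover have "deriv f1 u < 0"
    using f1.deriv_neg calculation by blast
  ultimately have "yp - s / deriv f1 u * f1 u = y"
    using assms(2) by (simp add: field_simps)
  then show ?thesis
    using fabc_joins_right_branch[OF assms(1,2) \<open>0 < u\<close>] by simp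
qed

lemma fabc_joins_Fin_Infty:
  assumes "strongly_hyperbolic_function f1" "s < 0" "x < xp"
  shows "fabc_joins f1 f2 s xp yp (Fin x, Infty)"
  using fabc_joins_right_branch[OF assms(1,2), of "xp - x"] assms(3) by simp

text \<open>With q = p + (d, e): for e > 0 the point q lies on the right branch of a curve having p on
  its left branch, for s d < e < 0 on the right branch together with p, and for e < s d on the
  left branch together with p.\<close>
lemma fabc_joins_Fin_Fin:
  assumes "strongly_hyperbolic_function f1" "strongly_hyperbolic_function f2" "s < 0"
    and "xp < x" "y \<noteq> yp" "y - yp \<noteq> s * (x - xp)"
  shows "fabc_joins f1 f2 s xp yp (Fin x, Fin y)"
proof -
  interpret f1: strongly_hyperbolic_function f1
    by fact
  interpret f2: strongly_hyperbolic_function f2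
    by fact
  define d e where "d = x - xp" and "e = y - yp"
  have "0 < d" "s * d < 0" "s \<noteq> 0"
    using assms(3,4) by (auto simp: d_def mult_neg_pos)
  have q: "(Fin x, Fin y) = (Fin (xp + d), Fin (yp + e))"
    by (simp add: d_def e_def)
  consider "0 < e" | "s * d < e" "e < 0" | "e < s * d"
    using assms(5,6) \<open>s * d < 0\<close> unfolding d_def e_def by fastforce
  then show ?thesis
  proof cases
    case 1
    then have "0 < e / - s"
      using assms(3) by (simp add: divide_pos_neg)
    obtain w where "0 < w" "w < d" and w: "(f1 (d - w) + f2 w) / - deriv f2 w = e / - s"
      using f2.ex_sum_div_neg_deriv_eq[OF assms(1) \<open>0 < d\<close> \<open>0 < e / - s\<close>] by auto
    moreover have "deriv f2 w \<noteq> 0"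
      using f2.deriv_neg[OF \<open>0 < w\<close>] by simp
    ultimately show ?thesis
      unfolding q using \<open>s \<noteq> 0\<close>
      by (intro fabc_joins_left_branch[OF assms(2,3) \<open>0 < w\<close>]) (simp add: fabc_right field_simps)
  next
    case 2
    then obtain u where "0 < u" and u: "(f1 u - f1 (u + d)) / - deriv f1 u = e / s"
      using f1.ex_forward_difference_div_neg_deriv_eq[of "e / s" d] assms(3)
      by (auto simp: divide_neg_neg neg_divide_less_eq mult.commute)
    moreover have "deriv f1 u \<noteq> 0"
      using f1.deriv_neg[OF \<open>0 < u\<close>] by simp
    ultimately show ?thesis
      unfolding q using \<open>0 < d\<close> \<open>s \<noteq> 0\<close>
      by (intro fabc_joins_right_branch[OF assms(1,3) \<open>0 < u\<close>]) (simp add: fabc_right field_simps)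
  next
    case 3
    then obtain w where "d < w" and w: "(f2 (w - d) - f2 w) / - deriv f2 w = e / s"
      using f2.ex_backward_difference_div_neg_deriv_eq[of d "e / s"] \<open>0 < d\<close> assms(3)
      by (auto simp: neg_less_divide_eq mult.commute)
    moreover have "0 < w" "deriv f2 w \<noteq> 0"
      using f2.deriv_neg[of w] \<open>d < w\<close> \<open>0 < d\<close> by simp_all
    ultimately show ?thesis
      unfolding q using \<open>s \<noteq> 0\<close>
      by (intro fabc_joins_left_branch[OF assms(2,3) \<open>0 < w\<close>]) (simp add: fabc_left field_simps)
  qed
qed

lemma fabc_secant_ne_tangent_right:
  assumes "strongly_hyperbolic_function f1" "strongly_hyperbolic_function f2"
    and "0 < a" "- b < xp" "x \<noteq> - b" "x \<noteq> xp"
    and "(fabc f1 f2 a b c has_real_derivative s) (at xp)"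
  shows "fabc f1 f2 a b c x - fabc f1 f2 a b c xp \<noteq> s * (x - xp)"
proof -
  interpret f1: strongly_hyperbolic_function f1
    by fact
  interpret f2: strongly_hyperbolic_function f2
    by fact
  have s: "s = a * deriv f1 (xp + b)"
    using DERIV_unique[OF assms(7) fabc_has_real_derivative_right[OF assms(1,4)]] .
  show ?thesis
  proof (cases "- b < x")
    case True
    then have "deriv f1 (xp + b) * ((x + b) - (xp + b)) < f1 (x + b) - f1 (xp + b)"
      using assms(4,6) by (intro f1.strictly_above_tangent) auto
    then have "s * (x - xp) < a * (f1 (x + b) - f1 (xp + b))"
      using assms(3) by (simp add: s)
    then show ?thesis
      using True assms(4) by (simp add: fabc_right algebra_simps)
  next
    case False
    then have "x < - b" "x < xp"
      using assms(4,5) by auto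
    have "fabc f1 f2 a b c x < c" "c < fabc f1 f2 a b c xp"
      using \<open>x < - b\<close> assms(3,4) f2.pos[of "- x - b"] f1.pos[of "xp + b"]
      by (simp_all add: fabc_left fabc_right)
    moreover have "s < 0"
      using f1.deriv_neg[of "xp + b"] assms(3,4) by (simp add: s mult_pos_neg)
    then have "0 < s * (x - xp)"
      using \<open>x < xp\<close> by (simp add: mult_neg_neg)
    ultimately show ?thesis
      by linarith
  qed
qed

lemma fabc_secant_ne_tangent:
  assumes "strongly_hyperbolic_function f1" "strongly_hyperbolic_function f2"
    and "0 < a" "xp \<noteq> - b" "x \<noteq> - b" "x \<noteq> xp"
    and "(fabc f1 f2 a b c has_real_derivative s) (at xp)"
  shows "fabc f1 f2 a b c x - fabc f1 f2 a b c xp \<noteq> s * (x - xp)"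
proof (cases "- b < xp")
  case True
  then show ?thesis
    using fabc_secant_ne_tangent_right assms by blast
next
  case False
  then have "fabc f2 f1 a (- b) (- c) (- x) - fabc f2 f1 a (- b) (- c) (- xp) \<noteq> s * (- x - - xp)"
    using assms by (intro fabc_secant_ne_tangent_right fabc_mirror_has_real_derivative) auto
  then show ?thesis
    by (simp add: fabc_mirror[of f2 f1] algebra_simps)
qed

lemma not_fabc_joins_if_on_line:
  assumes "strongly_hyperbolic_function f1" "strongly_hyperbolic_function f2" "\<not> parallel (Fin xp, Fin yp) q"
    and "(Fin xp, Fin yp) \<in> line_bar s t" "q \<in> line_bar s t"
  shows "\<not> fabc_joins f1 f2 s xp yp q"
proof
  assume "fabc_joins f1 f2 s xp yp q"
  then obtain a b c where "0 < a" and p: "(Fin xp, Fin yp) \<in> fabc_bar f1 f2 a b c"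
    and q: "q \<in> fabc_bar f1 f2 a b c" and slope: "(fabc f1 f2 a b c has_real_derivative s) (at xp)"
    unfolding fabc_joins_def by blast
  from assms(5) consider (Fin) x where "q = (Fin x, Fin (s * x + t))" | (Infty) "q = (Infty, Infty)"
    unfolding line_bar_def by blast
  then show False
  proof cases
    case (Fin x)
    then have "x \<noteq> xp" "x \<noteq> - b" "s * x + t = fabc f1 f2 a b c x"
      using assms(3) q by (auto simp: parallel_def)
    moreover have "xp \<noteq> - b" "s * xp + t = fabc f1 f2 a b c xp"
      using assms(4) p by auto
    ultimately show False
      using fabc_secant_ne_tangent[OF assms(1,2) \<open>0 < a\<close> \<open>xp \<noteq> - b\<close> \<open>x \<noteq> - b\<close>
          \<open>x \<noteq> xp\<close> slope]
      by (simp add: algebra_simps)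
  qed (use q in simp)
qed

lemma fabc_joins_if_not_on_line:
  assumes "strongly_hyperbolic_function f1" "strongly_hyperbolic_function f2" "s < 0"
    and "\<not> parallel (Fin xp, Fin yp) q" "q \<notin> line_bar s (yp - s * xp)"
  shows "fabc_joins f1 f2 s xp yp q"
proof -
  have mirror: "fabc_joins f1 f2 s xp yp q" if "fabc_joins f2 f1 s (- xp) (- yp) (point_reflect q)"
    using that fabc_joins_mirror by blast
  obtain u v where "q = (u, v)"
    by fastforce
  then consider (Infty_Fin) y where "q = (Infty, Fin y)" "y \<noteq> yp"
    | (Fin_Infty) x where "q = (Fin x, Infty)" "x \<noteq> xp"
    | (Fin_Fin) x y where "q = (Fin x, Fin y)" "x \<noteq> xp" "y \<noteq> yp" "y - yp \<noteq> s * (x - xp)"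
    using assms(4,5) unfolding parallel_def by (cases u; cases v) (auto simp: algebra_simps)
  then show ?thesis
  proof cases
    case (Infty_Fin y)
    then show ?thesis
      using fabc_joins_Infty_Fin[OF assms(1,3), of y yp]
        fabc_joins_Infty_Fin[OF assms(2,3), of "- y" "- yp"] mirror by (cases "y < yp") auto
  next
    case (Fin_Infty x)
    then show ?thesis
      using fabc_joins_Fin_Infty[OF assms(1,3), of x xp]
        fabc_joins_Fin_Infty[OF assms(2,3), of "- x" "- xp"] mirror by (cases "x < xp") auto
  next
    case (Fin_Fin x y)
    then show ?thesis
      using fabc_joins_Fin_Fin[OF assms(1-3), of xp x y yp]
        fabc_joins_Fin_Fin[OF assms(2,1,3), of "- xp" "- x" "- y" "- yp"] mirror by (cases "xp < x") (auto simp: algebra_simps)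
  qed
qed

theorem lemma4p12:
  fixes f1 f2 :: "real \<Rightarrow> real" and xp yp s :: real and q :: point
  assumes "strongly_hyperbolic f1" and "strongly_hyperbolic f2"
    and "s < 0"
    and "\<not> parallel (Fin xp, Fin yp) q"
  shows "(\<exists>t. (Fin xp, Fin yp) \<in> line_bar s t \<and> q \<in> line_bar s t)
     \<longleftrightarrow> \<not> (\<exists>a1 b1 c1. a1 > 0 \<and> (Fin xp, Fin yp) \<in> fabc_bar f1 f2 a1 b1 c1 \<and>
              q \<in> fabc_bar f1 f2 a1 b1 c1 \<and>
              (fabc f1 f2 a1 b1 c1 has_real_derivative s) (at xp))"
  unfolding fabc_joins_def[symmetric]
proof
  have f1: "strongly_hyperbolic_function f1" and f2: "strongly_hyperbolic_function f2"
    using assms(1,2) by (simp_all add: strongly_hyperbolic_function_def)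
  show "\<not> fabc_joins f1 f2 s xp yp q"
    if "\<exists>t. (Fin xp, Fin yp) \<in> line_bar s t \<and> q \<in> line_bar s t"
    using that not_fabc_joins_if_on_line[OF f1 f2 assms(4)] by blast
  show "\<exists>t. (Fin xp, Fin yp) \<in> line_bar s t \<and> q \<in> line_bar s t"
    if "\<not> fabc_joins f1 f2 s xp yp q"
    using that fabc_joins_if_not_on_line[OF f1 f2 assms(3,4)] by (intro exI[of _ "yp - s * xp"]) auto
qed

end
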